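(* Let $B$ be an nbc basis of $M$ with $|\mathrm{IA}(B)|=k+1$. Write $B-\mathrm{IA}(B)=\{e_1>\cdots>e_{r-k}\}$ and $(E-B)-\min(E-B)=\{e_{r-k+1}<\cdots<e_{n-k-1}\}$, and let $\mathcal F(B)|\mathcal G(B)$ be the nbc biflag of $B$. Then $(\mathcal F(B)|\mathcal G(B),(e_1,\dots,e_{n-k-1}))\in\mathcal T^{n-k-1}$; equivalently, for every $e\in (B-\mathrm{IA}(B))\cup((E-B)-\min(E-B))$, \[ e=\max\Big(E-\mathrm{cl}\big((B-\mathrm{IA}(B))_{>e}\big)-\mathrm{cl}^\perp\big((E-B)_{>e}\big)\Big), \] where $X_{>e}=\{x\in X:x>e\}$.
   Context: Let $M$ be a matroid with no loops and no coloops on the ground set $E=\{0,1,\dots,n\}$, totally ordered by the usual order of integers, of rank $r+1$; its dual $M^\perp$ has rank $n-r$. Write $\mathrm{cl}$, $\mathrm{cl}^\perp$ for the closure operators of $M$, $M^\perp$. A biflat of $M$ is a pair $F|G$ where $F$ is a flat of $M$, $G$ is a flat of $M^\perp$, both are nonempty, they are not both equal to $E$, and $F\cup G=E$. Two biflats $F|G$, $F'|G'$ are compatible if ($F\subseteq F'$ and $G\supseteq G'$) or ($F\supseteq F'$ and $G\subseteq G'$). A biflag is a set of pairwise compatible biflats with $\bigcup_{F|G}(F\cap G)\neq E$; its length is its number of biflats. For a basis $B$ and $i\in B$, $C^\perp(B,i)$ is the unique cocircuit of $M$ contained in $(E-B)\cup i$ and containing $i$; for $i\notin B$, $C(B,i)$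 is the unique circuit contained in $B\cup i$ and containing $i$. $\mathrm{IA}(B)=\{i\in B: i=\min C^\perp(B,i)\}$, $\mathrm{EA}(B)=\{i\notin B: i=\min C(B,i)\}$. $B$ is an nbc basis if $\mathrm{EA}(B)=\emptyset$. nbc biflag: with $e_1,\dots,e_{n-k-1}$ as in the claim, $\mathcal F(B)|\mathcal G(B)$ is the biflag with biflats $F_j|G_j=\mathrm{cl}\{e_1,\dots,e_j\}|E$ for $1\le j\le r-k$ and $F_j|G_j=E|\mathrm{cl}^\perp\{e_j,\dots,e_{n-k-1}\}$ for $r-k+1\le j\le n-k-1$. $\mathcal T^m$: the set of pairs $(\mathcal F|\mathcal G,\mathbf e)$ with $\mathcal F|\mathcal G$ a biflag of length $m$ with biflats indexed $F_1|G_1,\dots,F_m|G_m$, $F_1\subseteq\cdots\subseteq F_m$, $G_1\supseteq\cdots\supseteq G_m$, and $\mathbf e=(e_1,\dots,e_m)$ distinct elements of $E$ with $e_i\in F_i\cap G_i$ and $e_i=\max\big(E-\bigcup_{j:\,e_j>e_i}(F_j\cap G_j)\big)$ for all $i$. *)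

theory Defs
  imports Main
begin

definition matroid_bases :: "'a set \<Rightarrow> 'a set set \<Rightarrow> bool" where
  "matroid_bases E Bs \<longleftrightarrow> finite E \<and> Bs \<noteq> {} \<and> (\<forall>B\<in>Bs. B \<subseteq> E) \<and>
     (\<forall>B1\<in>Bs. \<forall>B2\<in>Bs. \<forall>x\<in>B1 - B2. \<exists>y\<in>B2 - B1. insert y (B1 - {x}) \<in> Bs)"

definition indep :: "'a set set \<Rightarrow> 'a set \<Rightarrow> bool" where
  "indep Bs X \<longleftrightarrow> (\<exists>B\<in>Bs. X \<subseteq> B)"

definition rk :: "'a set set \<Rightarrow> 'a set \<Rightarrow> nat" where
  "rk Bs X = Max (card ` {I. I \<subseteq> X \<and> indep Bs I})"

definition cl :: "'a set \<Rightarrow> 'a set set \<Rightarrow> 'a set \<Rightarrow> 'a set" where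
  "cl E Bs X = {x\<in>E. rk Bs (insert x X) = rk Bs X}"

definition flat :: "'a set \<Rightarrow> 'a set set \<Rightarrow> 'a set \<Rightarrow> bool" where
  "flat E Bs F \<longleftrightarrow> F \<subseteq> E \<and> cl E Bs F = F"

definition dual_bases :: "'a set \<Rightarrow> 'a set set \<Rightarrow> 'a set set" where
  "dual_bases E Bs = (\<lambda>B. E - B) ` Bs"

definition circuit :: "'a set \<Rightarrow> 'a set set \<Rightarrow> 'a set \<Rightarrow> bool" where
  "circuit E Bs C \<longleftrightarrow> C \<subseteq> E \<and> \<not> indep Bs C \<and> (\<forall>x\<in>C. indep Bs (C - {x}))"

definition fund_circuit :: "'a set \<Rightarrow> 'a set set \<Rightarrow> 'a set \<Rightarrow> 'a \<Rightarrow> 'a set" where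
  "fund_circuit E Bs B i = (THE C. circuit E Bs C \<and> C \<subseteq> insert i B \<and> i \<in> C)"

definition fund_cocircuit :: "'a set \<Rightarrow> 'a set set \<Rightarrow> 'a set \<Rightarrow> 'a \<Rightarrow> 'a set" where
  "fund_cocircuit E Bs B i = fund_circuit E (dual_bases E Bs) (E - B) i"

definition IA :: "'a::linorder set \<Rightarrow> 'a set set \<Rightarrow> 'a set \<Rightarrow> 'a set" where
  "IA E Bs B = {i\<in>B. i = Min (fund_cocircuit E Bs B i)}"

definition EA :: "'a::linorder set \<Rightarrow> 'a set set \<Rightarrow> 'a set \<Rightarrow> 'a set" where
  "EA E Bs B = {i\<in>E - B. i = Min (fund_circuit E Bs B i)}"

definition nbc_basis :: "'a::linorder set \<Rightarrow> 'a set set \<Rightarrow> 'a set \<Rightarrow> bool" where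
  "nbc_basis E Bs B \<longleftrightarrow> B \<in> Bs \<and> EA E Bs B = {}"

definition biflat :: "'a set \<Rightarrow> 'a set set \<Rightarrow> 'a set \<Rightarrow> 'a set \<Rightarrow> bool" where
  "biflat E Bs F G \<longleftrightarrow> flat E Bs F \<and> flat E (dual_bases E Bs) G \<and> F \<noteq> {} \<and> G \<noteq> {}
     \<and> \<not> (F = E \<and> G = E) \<and> F \<union> G = E"

definition compatible :: "'a set \<times> 'a set \<Rightarrow> 'a set \<times> 'a set \<Rightarrow> bool" where
  "compatible p q \<longleftrightarrow> (fst p \<subseteq> fst q \<and> snd p \<supseteq> snd q) \<or> (fst p \<supseteq> fst q \<and> snd p \<subseteq> snd q)"

definition biflag :: "'a set \<Rightarrow> 'a set set \<Rightarrow> ('a set \<times> 'a set) set \<Rightarrow> bool" where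
  "biflag E Bs S \<longleftrightarrow> (\<forall>p\<in>S. biflat E Bs (fst p) (snd p)) \<and> (\<forall>p\<in>S. \<forall>q\<in>S. compatible p q)
     \<and> (\<Union>p\<in>S. fst p \<inter> snd p) \<noteq> E"

(* Membership in T^m of the indexed biflag F_1|G_1,...,F_m|G_m with elements e_1,...,e_m
   (indices 1..m; the biflats are pairwise distinct, so the biflag has length m). *)
definition in_T :: "'a::linorder set \<Rightarrow> 'a set set \<Rightarrow> nat \<Rightarrow> (nat \<Rightarrow> 'a set) \<Rightarrow> (nat \<Rightarrow> 'a set)
     \<Rightarrow> (nat \<Rightarrow> 'a) \<Rightarrow> bool" where
  "in_T E Bs m Fs Gs es \<longleftrightarrow>
     biflag E Bs ((\<lambda>i. (Fs i, Gs i)) ` {1..m}) \<and>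
     inj_on (\<lambda>i. (Fs i, Gs i)) {1..m} \<and>
     (\<forall>i\<in>{1..m}. \<forall>j\<in>{1..m}. i \<le> j \<longrightarrow> Fs i \<subseteq> Fs j \<and> Gs j \<subseteq> Gs i) \<and>
     inj_on es {1..m} \<and> es ` {1..m} \<subseteq> E \<and>
     (\<forall>i\<in>{1..m}. es i \<in> Fs i \<inter> Gs i \<and>
        es i = Max (E - (\<Union>j\<in>{j\<in>{1..m}. es j > es i}. Fs j \<inter> Gs j)))"

(* the sequence e_1,...,e_{n-k-1} attached to a basis B (1-indexed) *)
definition nbc_seq :: "'a::linorder set \<Rightarrow> 'a set set \<Rightarrow> 'a set \<Rightarrow> nat \<Rightarrow> 'a" where
  "nbc_seq E Bs B j = (rev (sorted_list_of_set (B - IA E Bs B))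
      @ sorted_list_of_set ((E - B) - {Min (E - B)})) ! (j - 1)"

(* the nbc biflag F(B)|G(B); r - k = |B - IA(B)|, m = n - k - 1 its length *)
definition nbc_F :: "'a::linorder set \<Rightarrow> 'a set set \<Rightarrow> 'a set \<Rightarrow> nat \<Rightarrow> nat \<Rightarrow> 'a set" where
  "nbc_F E Bs B s j = (if j \<le> s then cl E Bs (nbc_seq E Bs B ` {1..j}) else E)"

definition nbc_G :: "'a::linorder set \<Rightarrow> 'a set set \<Rightarrow> 'a set \<Rightarrow> nat \<Rightarrow> nat \<Rightarrow> nat \<Rightarrow> 'a set" where
  "nbc_G E Bs B s m j = (if j \<le> s then E else cl E (dual_bases E Bs) (nbc_seq E Bs B ` {j..m}))"

end

(*
  Sorting B - IA(B) downwards and (E - B) - min(E - B) upwards, every biflat of the nbc biflag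
  is the closure of an upper set: F_j = cl {x in B - IA(B). x >= e_j} and
  G_j = cl* {y in (E - B) - min(E - B). y >= e_j}. An element e lies in the closure of a set of
  basis elements all larger than e only if e is in that set or is the minimum of its fundamental
  circuit. The nbc condition rules out the latter for e outside B, and e not in IA(B) rules it out
  dually, so e_i is missed by every biflat with larger index element. Conversely each y > e_i is
  caught by such a biflat: the elements of the two parts are themselves some e_j, and y in IA(B)
  lies in cl* of the upper set starting at the second smallest element of its fundamental
  cocircuit, which exists because y is not a coloop. Finally min(E - B) is caught by no biflat,
  which makes the biflats a biflag: the minimum of its fundamental circuit would be an internally
  passive element below min(E - B), whose fundamental cocircuit would reach below min(E - B).
*)
theory Submission
  imports Defs
begin

locale matroid =
  fixes E :: "'a set" and Bs :: "'a set set" and c :: nat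
  assumes matroid_bases: "matroid_bases E Bs"
    and card_basis: "B \<in> Bs \<Longrightarrow> card B = c"
begin

lemma finite_ground: "finite E"
  using matroid_bases by (simp add: matroid_bases_def)

lemma basis_subset: "B \<in> Bs \<Longrightarrow> B \<subseteq> E"
  using matroid_bases by (simp add: matroid_bases_def)

lemma finite_basis: "B \<in> Bs \<Longrightarrow> finite B"
  using basis_subset finite_ground finite_subset by blast

lemma basis_exchange:
  "B1 \<in> Bs \<Longrightarrow> B2 \<in> Bs \<Longrightarrow> x \<in> B1 - B2 \<Longrightarrow> \<exists>y\<in>B2 - B1. insert y (B1 - {x}) \<in> Bs"
  using matroid_bases unfolding matroid_bases_def by blast

lemma indep_subset: "indep Bs X \<Longrightarrow> Y \<subseteq> X \<Longrightarrow> indep Bs Y"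
  unfolding indep_def by blast

lemma indep_basis: "B \<in> Bs \<Longrightarrow> indep Bs B"
  unfolding indep_def by blast

lemma indep_subset_basis: "B \<in> Bs \<Longrightarrow> X \<subseteq> B \<Longrightarrow> indep Bs X"
  unfolding indep_def by blast

lemma indep_subset_ground: "indep Bs X \<Longrightarrow> X \<subseteq> E"
  unfolding indep_def using basis_subset by blast

lemma finite_indep: "indep Bs X \<Longrightarrow> finite X"
  using indep_subset_ground finite_ground finite_subset by blast

lemma indep_empty: "indep Bs {}"
  using matroid_bases unfolding indep_def matroid_bases_def by blast

lemma card_indep_le: "indep Bs X \<Longrightarrow> card X \<le> c"
  unfolding indep_def using card_basis finite_basis card_mono by metis

lemma indep_card_eq_basis: "indep Bs X \<Longrightarrow> card X = c \<Longrightarrow> X \<in> Bs"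
  unfolding indep_def using card_basis finite_basis card_subset_eq by metis

lemma finite_indep_subsets: "finite {I. I \<subseteq> X \<and> indep Bs I}"
  by (rule finite_subset[of _ "Pow E"]) (use finite_ground indep_subset_ground in auto)

lemma card_le_rk: "I \<subseteq> X \<Longrightarrow> indep Bs I \<Longrightarrow> card I \<le> rk Bs X"
  unfolding rk_def using finite_indep_subsets by (intro Max_ge) auto

lemma rk_attained: "\<exists>I. I \<subseteq> X \<and> indep Bs I \<and> card I = rk Bs X"
proof -
  have "rk Bs X \<in> card ` {I. I \<subseteq> X \<and> indep Bs I}"
    unfolding rk_def using finite_indep_subsets indep_empty by (intro Max_in) auto
  then show ?thesis by auto
qed

lemma rk_indep: "indep Bs X \<Longrightarrow> rk Bs X = card X"
  using rk_attained[of X] card_le_rk[of X X] finite_indep card_mono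
  by (metis le_antisym order_refl)

lemma cl_indep_iff:
  assumes X: "indep Bs X"
  shows "x \<in> cl E Bs X \<longleftrightarrow> x \<in> E \<and> (x \<in> X \<or> \<not> indep Bs (insert x X))"
proof (cases "x \<in> X \<or> indep Bs (insert x X)")
  case True
  with X finite_indep[OF X] rk_indep show ?thesis
    unfolding cl_def using indep_subset_ground[OF X] by (auto simp: insert_absorb)
next
  case False
  obtain I where I: "I \<subseteq> insert x X" "indep Bs I" "card I = rk Bs (insert x X)"
    using rk_attained by blast
  have "I \<noteq> insert x X"
    using I(2) False by blast
  then have "card I < card (insert x X)"
    using I(1) finite_indep[OF X] by (intro psubset_card_mono) auto
  moreover have "card X \<le> rk Bs (insert x X)"
    using card_le_rk[OF _ X] by auto
  ultimately have "rk Bs (insert x X) = rk Bs X"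
    using I(3) False finite_indep[OF X] rk_indep[OF X] by simp
  then show ?thesis
    unfolding cl_def using False by auto
qed

lemma card_Diff_eq_card_Diff:
  "finite A \<Longrightarrow> finite B \<Longrightarrow> card A = card B \<Longrightarrow> card (A - B) = card (B - A)"
  by (simp add: card_Diff_subset_Int Int_commute)

lemma bases_covering_indeps:
  assumes "indep Bs I" and "indep Bs J"
  shows "\<exists>B1\<in>Bs. \<exists>B2\<in>Bs. I \<subseteq> B1 \<and> J \<subseteq> B2 \<and> B2 \<subseteq> J \<union> B1"
proof -
  define P where "P = (\<lambda>(B1, B2). B1 \<in> Bs \<and> I \<subseteq> B1 \<and> B2 \<in> Bs \<and> J \<subseteq> B2)"
  obtain B1 B2 where "P (B1, B2)"
    using assms unfolding P_def indep_def by blast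
  then obtain B1 B2 where P: "P (B1, B2)"
    and least: "\<And>B1' B2'. P (B1', B2') \<Longrightarrow> card (B2 - (J \<union> B1)) \<le> card (B2' - (J \<union> B1'))"
    using ex_has_least_nat[of P "(B1, B2)" "\<lambda>(B1, B2). card (B2 - (J \<union> B1))"]
    by (metis (no_types, lifting) case_prod_conv surj_pair)
  have B1: "B1 \<in> Bs" "I \<subseteq> B1" and B2: "B2 \<in> Bs" "J \<subseteq> B2"
    using P unfolding P_def by auto
  have "B2 \<subseteq> J \<union> B1"
  proof
    fix x assume x: "x \<in> B2"
    show "x \<in> J \<union> B1"
    proof (rule ccontr)
      assume x': "x \<notin> J \<union> B1"
      \<comment> \<open>exchanging \<open>x\<close> for an element of \<open>B1\<close> would decrease the measure\<close>
      obtain y where y: "y \<in> B1 - B2" "insert y (B2 - {x}) \<in> Bs"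
        using basis_exchange[OF B2(1) B1(1)] x x' by blast
      have "P (B1, insert y (B2 - {x}))"
        unfolding P_def using B1 B2 y x' by auto
      moreover have "insert y (B2 - {x}) - (J \<union> B1) = B2 - (J \<union> B1) - {x}"
        using y by auto
      moreover have "card (B2 - (J \<union> B1) - {x}) < card (B2 - (J \<union> B1))"
        using x x' finite_basis[OF B2(1)] by (intro card_Diff1_less) auto
      ultimately show False
        using least[of B1 "insert y (B2 - {x})"] by simp
    qed
  qed
  then show ?thesis
    using B1 B2 by blast
qed

lemma indep_augment:
  assumes I: "indep Bs I" and J: "indep Bs J" and less: "card I < card J"
  shows "\<exists>y\<in>J - I. indep Bs (insert y I)"
proof (rule ccontr)
  assume no_aug: "\<not> (\<exists>y\<in>J - I. indep Bs (insert y I))"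
  obtain B1 B2 where B1: "B1 \<in> Bs" "I \<subseteq> B1" and B2: "B2 \<in> Bs" "J \<subseteq> B2"
    and B2_sub: "B2 \<subseteq> J \<union> B1"
    using bases_covering_indeps[OF I J] by blast
  have "B1 - B2 \<subseteq> I - J"
  proof
    fix x assume x: "x \<in> B1 - B2"
    obtain y where y: "y \<in> B2 - B1" "insert y (B1 - {x}) \<in> Bs"
      using basis_exchange[OF B1(1) B2(1)] x by blast
    have "y \<in> J - I"
      using y B2_sub B1 by auto
    then have "\<not> I \<subseteq> B1 - {x}"
      using no_aug y(2) unfolding indep_def by blast
    then show "x \<in> I - J"
      using x B1(2) B2(2) by auto
  qed
  moreover have "J - I \<subseteq> B2 - B1"
    using no_aug B1 B2 indep_subset_basis[of B1 "insert _ I"] by blast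
  ultimately have "card (J - I) \<le> card (I - J)"
    using card_Diff_eq_card_Diff[OF finite_basis[OF B1(1)] finite_basis[OF B2(1)]]
      card_basis[OF B1(1)] card_basis[OF B2(1)] finite_indep[OF I] finite_basis[OF B2(1)]
    by (metis card_mono finite_Diff le_trans)
  moreover have "card (I - J) < card (J - I)"
    using less finite_indep[OF I] finite_indep[OF J]
    by (simp add: card_Diff_subset_Int Int_commute card_mono diff_less_mono)
  ultimately show False
    by simp
qed

lemma indep_extend_basis:
  assumes J: "indep Bs J" "J \<subseteq> X" and B: "B \<in> Bs" "B \<subseteq> X"
  shows "\<exists>B'\<in>Bs. J \<subseteq> B' \<and> B' \<subseteq> X"
proof -
  define P where "P = (\<lambda>I. J \<subseteq> I \<and> I \<subseteq> X \<and> indep Bs I)"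
  have "P J"
    using J unfolding P_def by simp
  then obtain I where P: "P I" and maximal: "\<And>I'. P I' \<Longrightarrow> c - card I \<le> c - card I'"
    using ex_has_least_nat[of P J "\<lambda>I. c - card I"] by blast
  have I: "J \<subseteq> I" "I \<subseteq> X" "indep Bs I"
    using P unfolding P_def by auto
  have "c \<le> card I"
  proof (rule ccontr)
    assume "\<not> c \<le> card I"
    then obtain y where y: "y \<in> B - I" "indep Bs (insert y I)"
      using indep_augment[OF I(3) indep_basis[OF B(1)]] card_basis[OF B(1)] by auto
    then have "P (insert y I)"
      unfolding P_def using I B(2) by auto
    moreover have "card (insert y I) = Suc (card I)"
      using y finite_indep[OF I(3)] by simp
    ultimately show False
      using maximal \<open>\<not> c \<le> card I\<close> by fastforce
  qed
  then have "I \<in> Bs"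
    using card_indep_le[OF I(3)] indep_card_eq_basis[OF I(3)] by simp
  then show ?thesis
    using I by blast
qed

lemma cl_subset_ground: "cl E Bs X \<subseteq> E"
  unfolding cl_def by auto

lemma subset_cl: "X \<subseteq> E \<Longrightarrow> X \<subseteq> cl E Bs X"
  unfolding cl_def by (auto simp: insert_absorb)

lemma cl_cl_indep:
  assumes S: "indep Bs S"
  shows "cl E Bs (cl E Bs S) = cl E Bs S"
proof
  show "cl E Bs (cl E Bs S) \<subseteq> cl E Bs S"
  proof
    fix x assume x: "x \<in> cl E Bs (cl E Bs S)"
    show "x \<in> cl E Bs S"
    proof (rule ccontr)
      assume "x \<notin> cl E Bs S"
      then have x': "x \<notin> S" "indep Bs (insert x S)"
        using x cl_subset_ground cl_indep_iff[OF S] by auto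
      have "card (insert x S) \<le> rk Bs (insert x (cl E Bs S))"
        using subset_cl[OF indep_subset_ground[OF S]] x' by (intro card_le_rk) auto
      also have "\<dots> = rk Bs (cl E Bs S)"
        using x unfolding cl_def by simp
      finally have "card S < rk Bs (cl E Bs S)"
        using x' finite_indep[OF S] by simp
      moreover obtain I where I: "I \<subseteq> cl E Bs S" "indep Bs I" "card I = rk Bs (cl E Bs S)"
        using rk_attained by blast
      ultimately obtain y where "y \<in> I - S" "indep Bs (insert y S)"
        using indep_augment[OF S I(2)] by auto
      then show False
        using I(1) cl_indep_iff[OF S] by auto
    qed
  qed
qed (rule subset_cl[OF cl_subset_ground])

lemma flat_cl_indep: "indep Bs S \<Longrightarrow> flat E Bs (cl E Bs S)"
  unfolding flat_def using cl_subset_ground cl_cl_indep by auto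

lemma flat_ground: "flat E Bs E"
  unfolding flat_def cl_def by (auto simp: insert_absorb)

lemma cl_mono_subset_basis:
  assumes "B \<in> Bs" "X \<subseteq> Y" "Y \<subseteq> B"
  shows "cl E Bs X \<subseteq> cl E Bs Y"
proof -
  have "indep Bs X" "indep Bs Y"
    using assms indep_subset_basis by auto
  moreover have "indep Bs (insert x Y) \<Longrightarrow> indep Bs (insert x X)" for x
    using assms(2) indep_subset by blast
  ultimately show ?thesis
    using assms(2) by (auto simp: cl_indep_iff)
qed

lemma basis_elem_notin_cl: "B \<in> Bs \<Longrightarrow> X \<subseteq> B \<Longrightarrow> b \<in> B - X \<Longrightarrow> b \<notin> cl E Bs X"
  using cl_indep_iff indep_subset_basis[of B X] indep_subset_basis[of B "insert b X"] by auto

lemma exchange_within_insert: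
  assumes B: "B \<in> Bs" and B': "B' \<in> Bs" "B' \<subseteq> insert x B" and x: "x \<notin> B"
    and y: "y \<in> B" "y \<notin> B'"
  shows "B' = insert x (B - {y})"
proof -
  have fin: "finite B"
    using finite_basis[OF B] .
  have "card B > 0"
    using fin y card_gt_0_iff by blast
  then have "card (insert x (B - {y})) = card B"
    using fin x y by simp
  then show ?thesis
    using card_subset_eq[of "insert x (B - {y})" B'] fin B' y card_basis[OF B] card_basis[OF B'(1)]
    by auto
qed

lemma dual_matroid: "matroid E (dual_bases E Bs) (card E - c)"
proof
  show "matroid_bases E (dual_bases E Bs)"
    unfolding matroid_bases_def
  proof (intro conjI ballI)
    show "finite E" "dual_bases E Bs \<noteq> {}"
      using finite_ground matroid_bases unfolding dual_bases_def matroid_bases_def by auto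
  next
    fix D assume "D \<in> dual_bases E Bs"
    then show "D \<subseteq> E"
      unfolding dual_bases_def by auto
  next
    fix D1 D2 x assume D: "D1 \<in> dual_bases E Bs" "D2 \<in> dual_bases E Bs" and x: "x \<in> D1 - D2"
    obtain B1 B2 where B: "B1 \<in> Bs" "B2 \<in> Bs" and D1: "D1 = E - B1" and D2: "D2 = E - B2"
      using D unfolding dual_bases_def by auto
    have x': "x \<in> E" "x \<notin> B1" "x \<in> B2"
      using x D1 D2 by auto
    have "indep Bs (insert x (B1 \<inter> B2))"
      using indep_subset_basis[OF B(2)] x' by simp
    then obtain B3 where B3: "B3 \<in> Bs" "insert x (B1 \<inter> B2) \<subseteq> B3" "B3 \<subseteq> insert x B1"
      using indep_extend_basis[of _ "insert x B1" B1] B(1) by blast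
    have "card (insert x B1) = Suc c"
      using finite_basis[OF B(1)] card_basis[OF B(1)] x' by simp
    then have "B3 \<noteq> insert x B1"
      using card_basis[OF B3(1)] by auto
    then obtain y where y: "y \<in> B1" "y \<notin> B3"
      using B3 by blast
    then have "B3 = insert x (B1 - {y})"
      by (rule exchange_within_insert[OF B(1) B3(1,3) x'(2)])
    then have "insert y (D1 - {x}) = E - B3"
      using basis_subset[OF B(1)] x' y D1 by auto
    then have "insert y (D1 - {x}) \<in> dual_bases E Bs"
      unfolding dual_bases_def using B3(1) by blast
    moreover have "y \<in> D2 - D1"
      using y B3(2) basis_subset[OF B(1)] D1 D2 by auto
    ultimately show "\<exists>y\<in>D2 - D1. insert y (D1 - {x}) \<in> dual_bases E Bs"
      by blast
  qed
next
  fix D assume "D \<in> dual_bases E Bs"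
  then show "card D = card E - c"
    unfolding dual_bases_def using card_basis basis_subset finite_basis by (auto simp: card_Diff_subset)
qed

lemma finite_circuit: "circuit E Bs C \<Longrightarrow> finite C"
  unfolding circuit_def using finite_subset[OF _ finite_ground] by blast

lemma circuit_not_indep: "circuit E Bs C \<Longrightarrow> C \<subseteq> Y \<Longrightarrow> \<not> indep Bs Y"
  unfolding circuit_def using indep_subset by blast

lemma singleton_circuit_notin_basis: "circuit E Bs {x} \<Longrightarrow> B \<in> Bs \<Longrightarrow> x \<notin> B"
  using circuit_not_indep indep_basis by blast

lemma dependent_contains_circuit:
  assumes X: "X \<subseteq> E" "\<not> indep Bs X"
  shows "\<exists>C\<subseteq>X. circuit E Bs C"
proof -
  define P where "P = (\<lambda>C. C \<subseteq> X \<and> \<not> indep Bs C)"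
  have "P X"
    unfolding P_def using X(2) by simp
  then obtain C where "P C" and least: "\<forall>C'. P C' \<longrightarrow> card C \<le> card C'"
    using ex_has_least_nat[of P X card] by blast
  then have C: "C \<subseteq> X" "\<not> indep Bs C"
    unfolding P_def by auto
  have fin: "finite C"
    using C(1) X(1) finite_subset[OF _ finite_ground] by blast
  have "indep Bs (C - {x})" if "x \<in> C" for x
  proof (rule ccontr)
    assume "\<not> indep Bs (C - {x})"
    then have "card C \<le> card (C - {x})"
      using least C(1) unfolding P_def by blast
    then show False
      using card_Diff1_less[OF fin that] by simp
  qed
  then have "circuit E Bs C"
    unfolding circuit_def using C X(1) by blast
  then show ?thesis
    using C(1) by blast
qed

lemma circuits_in_insert_basis_subset:
  assumes B: "B \<in> Bs" and x: "x \<notin> B"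
    and C: "circuit E Bs C" "C \<subseteq> insert x B" "x \<in> C"
    and D: "circuit E Bs D" "D \<subseteq> insert x B" "x \<in> D"
  shows "C \<subseteq> D"
proof
  fix y assume y: "y \<in> C"
  show "y \<in> D"
  proof (rule ccontr)
    assume y': "y \<notin> D"
    have "y \<in> B"
      using y C(2) D(3) y' by auto
    have "indep Bs (C - {y})"
      using C(1) y unfolding circuit_def by blast
    then obtain B' where B': "B' \<in> Bs" "C - {y} \<subseteq> B'" "B' \<subseteq> insert x B"
      using indep_extend_basis[of "C - {y}" "insert x B" B] B C(2) by blast
    have "y \<notin> B'"
      using circuit_not_indep[OF C(1)] indep_basis[OF B'(1)] B'(2) by blast
    then have "B' = insert x (B - {y})"
      using exchange_within_insert[OF B B'(1,3) x \<open>y \<in> B\<close>] by blast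
    then have "D \<subseteq> B'"
      using D(2) y' by auto
    then show False
      using circuit_not_indep[OF D(1)] indep_basis[OF B'(1)] by blast
  qed
qed

lemma fund_circuit_ex1:
  assumes B: "B \<in> Bs" and x: "x \<in> E" "x \<notin> B"
  shows "\<exists>!C. circuit E Bs C \<and> C \<subseteq> insert x B \<and> x \<in> C"
proof -
  have "card (insert x B) = Suc c"
    using finite_basis[OF B] card_basis[OF B] x by simp
  then have "\<not> indep Bs (insert x B)"
    using card_indep_le by fastforce
  moreover have "insert x B \<subseteq> E"
    using basis_subset[OF B] x(1) by blast
  ultimately obtain C where C: "C \<subseteq> insert x B" "circuit E Bs C"
    using dependent_contains_circuit by blast
  moreover have "x \<in> C"
    using C circuit_not_indep indep_basis[OF B] by blast
  ultimately show ?thesis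
    using circuits_in_insert_basis_subset[OF B x(2)] by (intro ex1I[of _ C]) blast+
qed

lemma fund_circuit:
  assumes "B \<in> Bs" "x \<in> E" "x \<notin> B"
  shows "circuit E Bs (fund_circuit E Bs B x)" "fund_circuit E Bs B x \<subseteq> insert x B"
    "x \<in> fund_circuit E Bs B x"
  using theI'[OF fund_circuit_ex1[OF assms]] unfolding fund_circuit_def by auto

lemma fund_circuit_eqI:
  assumes "B \<in> Bs" "x \<in> E" "x \<notin> B" "circuit E Bs C" "C \<subseteq> insert x B" "x \<in> C"
  shows "fund_circuit E Bs B x = C"
  unfolding fund_circuit_def using the1_equality[OF fund_circuit_ex1[OF assms(1-3)]] assms(4-6) by blast

lemma in_cl_iff_fund_circuit_subset:
  assumes B: "B \<in> Bs" and X: "X \<subseteq> B" and x: "x \<in> E" "x \<notin> B"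
  shows "x \<in> cl E Bs X \<longleftrightarrow> fund_circuit E Bs B x \<subseteq> insert x X"
proof
  have indep: "indep Bs X"
    using indep_subset_basis[OF B X] .
  assume "x \<in> cl E Bs X"
  then have "\<not> indep Bs (insert x X)"
    using cl_indep_iff[OF indep] x X by auto
  moreover have "insert x X \<subseteq> E"
    using X basis_subset[OF B] x(1) by blast
  ultimately obtain C where C: "C \<subseteq> insert x X" "circuit E Bs C"
    using dependent_contains_circuit by blast
  moreover have "x \<in> C"
    using C circuit_not_indep indep by blast
  ultimately show "fund_circuit E Bs B x \<subseteq> insert x X"
    using fund_circuit_eqI[OF B x] X by blast
next
  assume "fund_circuit E Bs B x \<subseteq> insert x X"
  then have "\<not> indep Bs (insert x X)"
    using circuit_not_indep fund_circuit[OF B x] by blast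
  then show "x \<in> cl E Bs X"
    using cl_indep_iff[OF indep_subset_basis[OF B X]] x by blast
qed

end

lemma strict_antimono_on_image_upto:
  fixes f :: "nat \<Rightarrow> 'a::linorder"
  assumes f: "strict_antimono_on {a..b} f" and j: "j \<in> {a..b}"
  shows "f ` {a..j} = {x \<in> f ` {a..b}. f j \<le> x}"
proof (intro set_eqI iffI)
  fix x assume "x \<in> f ` {a..j}"
  then obtain i where "i \<in> {a..j}" "x = f i"
    by blast
  moreover have "f j \<le> f i" if "i \<in> {a..j}"
    using monotone_onD[OF f, of i j] j that by (cases "i = j") auto
  ultimately show "x \<in> {x \<in> f ` {a..b}. f j \<le> x}"
    using j by auto
next
  fix x assume "x \<in> {x \<in> f ` {a..b}. f j \<le> x}"
  then obtain i where i: "i \<in> {a..b}" "x = f i" "f j \<le> f i"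
    by blast
  then have "\<not> j < i"
    using monotone_onD[OF f, of j i] j by auto
  then show "x \<in> f ` {a..j}"
    using i by auto
qed

lemma strict_mono_on_image_from:
  fixes f :: "nat \<Rightarrow> 'a::linorder"
  assumes f: "strict_mono_on {a..b} f" and j: "j \<in> {a..b}"
  shows "f ` {j..b} = {x \<in> f ` {a..b}. f j \<le> x}"
proof (intro set_eqI iffI)
  fix x assume "x \<in> f ` {j..b}"
  then obtain i where "i \<in> {j..b}" "x = f i"
    by blast
  moreover have "f j \<le> f i" if "i \<in> {j..b}"
    using monotone_onD[OF f, of j i] j that by (cases "i = j") auto
  ultimately show "x \<in> {x \<in> f ` {a..b}. f j \<le> x}"
    using j by auto
next
  fix x assume "x \<in> {x \<in> f ` {a..b}. f j \<le> x}"
  then obtain i where i: "i \<in> {a..b}" "x = f i" "f j \<le> f i"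
    by blast
  then have "\<not> i < j"
    using monotone_onD[OF f, of i j] j by auto
  then show "x \<in> f ` {j..b}"
    using i by auto
qed

lemma enum_rev_sorted_append_sorted:
  fixes X Y :: "'a::linorder set"
  assumes X: "finite X" and Y: "finite Y"
  defines "f \<equiv> \<lambda>j. (rev (sorted_list_of_set X) @ sorted_list_of_set Y) ! (j - 1)"
  shows "strict_antimono_on {1..card X} f" "f ` {1..card X} = X"
    and "strict_mono_on {card X + 1..card X + card Y} f" "f ` {card X + 1..card X + card Y} = Y"
proof -
  define xs where "xs = rev (sorted_list_of_set X)"
  define ys where "ys = sorted_list_of_set Y"
  have len: "length xs = card X" "length ys = card Y"
    unfolding xs_def ys_def by simp_all
  have set: "set xs = X" "set ys = Y"
    unfolding xs_def ys_def using X Y by simp_all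
  have sorted: "sorted_wrt (>) xs" "sorted_wrt (<) ys"
    unfolding xs_def ys_def using strict_sorted_list_of_set by (auto simp: sorted_wrt_rev)
  have f_xs: "f j = xs ! (j - 1)" if "j \<in> {1..card X}" for j
    unfolding f_def xs_def[symmetric] ys_def[symmetric] using that len by (auto simp: nth_append)
  have f_ys: "f j = ys ! (j - 1 - card X)" if "j \<in> {card X + 1..card X + card Y}" for j
    unfolding f_def xs_def[symmetric] ys_def[symmetric] using that len by (auto simp: nth_append)
  show "strict_antimono_on {1..card X} f"
    by (rule monotone_onI) (auto simp: f_xs len intro!: sorted_wrt_nth_less[OF sorted(1)])
  show "strict_mono_on {card X + 1..card X + card Y} f"
    by (rule monotone_onI) (auto simp: f_ys len intro!: sorted_wrt_nth_less[OF sorted(2)])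
  show "f ` {1..card X} = X"
  proof
    show "f ` {1..card X} \<subseteq> X"
      using f_xs len set by auto
    show "X \<subseteq> f ` {1..card X}"
    proof
      fix x assume "x \<in> X"
      then obtain i where "i < card X" "x = xs ! i"
        using set len by (metis in_set_conv_nth)
      then show "x \<in> f ` {1..card X}"
        using f_xs[of "Suc i"] by (intro image_eqI[of _ _ "Suc i"]) auto
    qed
  qed
  show "f ` {card X + 1..card X + card Y} = Y"
  proof
    show "f ` {card X + 1..card X + card Y} \<subseteq> Y"
      using f_ys len set by auto
    show "Y \<subseteq> f ` {card X + 1..card X + card Y}"
    proof
      fix y assume "y \<in> Y"
      then obtain i where "i < card Y" "y = ys ! i"
        using set len by (metis in_set_conv_nth)
      then show "y \<in> f ` {card X + 1..card X + card Y}"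
        using f_ys[of "Suc (card X + i)"] by (intro image_eqI[of _ _ "Suc (card X + i)"]) auto
    qed
  qed
qed

locale ordered_matroid = matroid E Bs c for E :: "'a::linorder set" and Bs c
begin

lemma Min_fund_circuit:
  assumes "B \<in> Bs" "x \<in> E" "x \<notin> B"
  shows "Min (fund_circuit E Bs B x) \<in> insert x B" "Min (fund_circuit E Bs B x) \<le> x"
  using fund_circuit[OF assms] finite_circuit Min_in Min_le by (metis empty_iff subsetD)+

lemma Min_fund_circuit_if_in_cl_greater:
  assumes B: "B \<in> Bs" and X: "X \<subseteq> B" "\<forall>y\<in>X. x < y"
    and x: "x \<in> E" "x \<notin> B" "x \<in> cl E Bs X"
  shows "Min (fund_circuit E Bs B x) = x"
proof -
  let ?C = "fund_circuit E Bs B x"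
  have "Min ?C \<in> insert x X"
    using in_cl_iff_fund_circuit_subset[OF B X(1) x(1,2)] x(3) fund_circuit[OF B x(1,2)]
      finite_circuit Min_in by blast
  then show ?thesis
    using Min_fund_circuit(2)[OF B x(1,2)] X(2) by fastforce
qed

end

locale nbc_basis_of = ordered_matroid E Bs c for E :: "'a::linorder set" and Bs c +
  fixes B :: "'a set"
  assumes nbc: "nbc_basis E Bs B"
    and no_coloops: "\<forall>x\<in>E. \<exists>B'\<in>Bs. x \<notin> B'"
    and ground_nonempty: "E \<noteq> {}"
begin

sublocale dual: ordered_matroid E "dual_bases E Bs" "card E - c"
  using dual_matroid unfolding ordered_matroid_def .

definition int_passive :: "'a set" where
  "int_passive = B - IA E Bs B"

definition cobasis_min :: 'a where
  "cobasis_min = Min (E - B)"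

definition cobasis_rest :: "'a set" where
  "cobasis_rest = E - B - {cobasis_min}"

lemma basis: "B \<in> Bs"
  using nbc unfolding nbc_basis_def by simp

lemma cobasis_dual_basis: "E - B \<in> dual_bases E Bs"
  unfolding dual_bases_def using basis by blast

lemma Min_fund_circuit_neq: "x \<in> E - B \<Longrightarrow> Min (fund_circuit E Bs B x) \<noteq> x"
  using nbc unfolding nbc_basis_def EA_def by auto

lemma IA_iff: "x \<in> IA E Bs B \<longleftrightarrow> x \<in> B \<and> Min (fund_circuit E (dual_bases E Bs) (E - B) x) = x"
  unfolding IA_def fund_cocircuit_def by auto

lemma cobasis_nonempty: "E - B \<noteq> {}"
proof
  assume "E - B = {}"
  then have "B = E"
    using basis_subset[OF basis] by blast
  obtain x B' where "x \<in> E" "B' \<in> Bs" "x \<notin> B'"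
    using no_coloops ground_nonempty by blast
  moreover have "B' = B"
    using card_subset_eq[of B B'] finite_basis[OF basis] basis_subset \<open>B' \<in> Bs\<close> \<open>B = E\<close>
      card_basis[OF basis] card_basis[OF \<open>B' \<in> Bs\<close>] by auto
  ultimately show False
    using \<open>B = E\<close> by blast
qed

lemma cobasis_min: "cobasis_min \<in> E - B" "y \<in> E - B \<Longrightarrow> cobasis_min \<le> y"
  unfolding cobasis_min_def using Min_in[of "E - B"] cobasis_nonempty finite_ground by auto

lemma cobasis_min_less: "x \<in> int_passive \<union> cobasis_rest \<Longrightarrow> cobasis_min < x"
proof (elim UnE)
  assume "x \<in> int_passive"
  then have x: "x \<in> E" "x \<notin> E - B" "x \<notin> IA E Bs B"
    unfolding int_passive_def using basis_subset[OF basis] by auto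
  let ?y = "Min (fund_circuit E (dual_bases E Bs) (E - B) x)"
  have "?y \<in> E - B" "?y < x"
    using dual.Min_fund_circuit[OF cobasis_dual_basis x(1,2)] x IA_iff by auto
  then show "cobasis_min < x"
    using cobasis_min(2) by fastforce
qed (use cobasis_min in \<open>force simp: cobasis_rest_def\<close>)

lemma int_passive_subset: "int_passive \<subseteq> B"
  unfolding int_passive_def by blast

lemma cobasis_rest_subset: "cobasis_rest \<subseteq> E - B"
  unfolding cobasis_rest_def by blast

lemma cobasis_min_notin_cl:
  assumes S: "S \<subseteq> int_passive"
  shows "cobasis_min \<notin> cl E Bs S"
proof
  assume in_cl: "cobasis_min \<in> cl E Bs S"
  let ?b = "Min (fund_circuit E Bs B cobasis_min)"
  have d: "cobasis_min \<in> E" "cobasis_min \<notin> B"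
    using cobasis_min(1) by auto
  have "?b \<in> fund_circuit E Bs B cobasis_min"
    using fund_circuit[OF basis d] finite_circuit Min_in by blast
  moreover have "fund_circuit E Bs B cobasis_min \<subseteq> insert cobasis_min S"
    using in_cl_iff_fund_circuit_subset[OF basis _ d] S int_passive_subset in_cl by blast
  moreover have "?b \<noteq> cobasis_min" "?b \<le> cobasis_min"
    using Min_fund_circuit_neq Min_fund_circuit(2)[OF basis d] d by auto
  \<comment> \<open>the minimum of the circuit is internally passive, so its cocircuit dips below \<open>cobasis_min\<close>\<close>
  ultimately have "?b \<in> int_passive" "?b < cobasis_min"
    using S by auto
  then show False
    using cobasis_min_less by fastforce
qed

lemma notin_cl_greater:
  assumes x: "x \<in> int_passive \<union> cobasis_rest"
    and S: "S \<subseteq> int_passive" "\<forall>y\<in>S. x < y"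
  shows "x \<notin> cl E Bs S"
  using x
proof (elim UnE)
  assume "x \<in> int_passive"
  then show ?thesis
    using basis_elem_notin_cl[OF basis] S int_passive_subset by blast
next
  assume "x \<in> cobasis_rest"
  then have "x \<in> E - B"
    using cobasis_rest_subset by blast
  then show ?thesis
    using Min_fund_circuit_if_in_cl_greater[OF basis _ S(2)] Min_fund_circuit_neq S(1)
      int_passive_subset by blast
qed

lemma notin_dual_cl_greater:
  assumes x: "x \<in> int_passive \<union> cobasis_rest"
    and T: "T \<subseteq> cobasis_rest" "\<forall>y\<in>T. x < y"
  shows "x \<notin> cl E (dual_bases E Bs) T"
  using x
proof (elim UnE)
  assume "x \<in> int_passive"
  then have "x \<in> E" "x \<notin> E - B" "x \<notin> IA E Bs B"
    unfolding int_passive_def using basis_subset[OF basis] by auto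
  then show ?thesis
    using dual.Min_fund_circuit_if_in_cl_greater[OF cobasis_dual_basis _ T(2)] T(1)
      cobasis_rest_subset IA_iff by blast
next
  assume "x \<in> cobasis_rest"
  then show ?thesis
    using dual.basis_elem_notin_cl[OF cobasis_dual_basis] T cobasis_rest_subset by blast
qed

lemma fund_cocircuit_ne_singleton:
  assumes "y \<in> B"
  shows "fund_circuit E (dual_bases E Bs) (E - B) y \<noteq> {y}"
proof
  assume "fund_circuit E (dual_bases E Bs) (E - B) y = {y}"
  then have "circuit E (dual_bases E Bs) {y}"
    using dual.fund_circuit[OF cobasis_dual_basis] assms basis_subset[OF basis] by force
  then have "y \<in> B'" if "B' \<in> Bs" for B'
    using dual.singleton_circuit_notin_basis[of y "E - B'"] that assms basis_subset[OF basis]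
    unfolding dual_bases_def by blast
  then show False
    using no_coloops assms basis_subset[OF basis] by blast
qed

lemma IA_in_dual_cl_upper:
  assumes y: "y \<in> IA E Bs B" "cobasis_min < y"
  shows "\<exists>w\<in>cobasis_rest. y < w \<and> y \<in> cl E (dual_bases E Bs) {z \<in> cobasis_rest. w \<le> z}"
proof -
  let ?C = "fund_circuit E (dual_bases E Bs) (E - B) y"
  have yB: "y \<in> B" "y \<in> E" "y \<notin> E - B"
    using y(1) IA_iff basis_subset[OF basis] by auto
  have C: "circuit E (dual_bases E Bs) ?C" "?C \<subseteq> insert y (E - B)" "y \<in> ?C"
    using dual.fund_circuit[OF cobasis_dual_basis yB(2,3)] by auto
  have fin: "finite ?C"
    using dual.finite_circuit[OF C(1)] .
  have "?C - {y} \<noteq> {}"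
    using fund_cocircuit_ne_singleton[OF yB(1)] C(3) by blast
  define w where "w = Min (?C - {y})"
  have w: "w \<in> ?C - {y}"
    unfolding w_def using Min_in[OF finite_Diff[OF fin]] \<open>?C - {y} \<noteq> {}\<close> .
  have above: "z \<in> cobasis_rest \<and> y < z" if z: "z \<in> ?C - {y}" for z
  proof -
    have "Min ?C \<le> z"
      using Min_le[OF fin] z by simp
    moreover have "Min ?C = y"
      using y(1) IA_iff by blast
    ultimately show ?thesis
      using z C(2) y(2) unfolding cobasis_rest_def by auto
  qed
  have "w \<le> z" if "z \<in> ?C - {y}" for z
    unfolding w_def using Min_le[OF finite_Diff[OF fin] that] .
  then have "?C \<subseteq> insert y {z \<in> cobasis_rest. w \<le> z}"
    using above by blast
  moreover have "{z \<in> cobasis_rest. w \<le> z} \<subseteq> E - B"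
    using cobasis_rest_subset by blast
  ultimately have "y \<in> cl E (dual_bases E Bs) {z \<in> cobasis_rest. w \<le> z}"
    using dual.in_cl_iff_fund_circuit_subset[OF cobasis_dual_basis _ yB(2,3)] by blast
  then show ?thesis
    using above[OF w] by blast
qed

text \<open>\<open>s\<close> and \<open>m\<close> are \<open>r - k\<close> and \<open>n - k - 1\<close> in the notation of the statement.\<close>

abbreviation "s \<equiv> card int_passive"
abbreviation "m \<equiv> card int_passive + card cobasis_rest"
abbreviation "es \<equiv> nbc_seq E Bs B"
abbreviation "F \<equiv> nbc_F E Bs B s"
abbreviation "G \<equiv> nbc_G E Bs B s m"

lemma es_enumerates:
  "strict_antimono_on {1..s} es" "es ` {1..s} = int_passive"
  "strict_mono_on {s + 1..m} es" "es ` {s + 1..m} = cobasis_rest"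
proof -
  have "finite int_passive" "finite cobasis_rest"
    using finite_subset[OF int_passive_subset finite_basis[OF basis]]
      finite_subset[OF cobasis_rest_subset] finite_ground by auto
  moreover have "es = (\<lambda>j. (rev (sorted_list_of_set int_passive) @ sorted_list_of_set cobasis_rest) ! (j - 1))"
    unfolding nbc_seq_def int_passive_def cobasis_rest_def cobasis_min_def by simp
  ultimately show "strict_antimono_on {1..s} es" "es ` {1..s} = int_passive"
    "strict_mono_on {s + 1..m} es" "es ` {s + 1..m} = cobasis_rest"
    using enum_rev_sorted_append_sorted by simp_all
qed

lemma es_image: "es ` {1..m} = int_passive \<union> cobasis_rest"
proof -
  have "{1..m} = {1..s} \<union> {s + 1..m}"
    by auto
  then show ?thesis
    using es_enumerates(2,4) by (simp add: image_Un)
qed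

lemma nbc_F_G_low:
  assumes "j \<in> {1..s}"
  shows "F j = cl E Bs {x \<in> int_passive. es j \<le> x}" "G j = E"
  using assms strict_antimono_on_image_upto[OF es_enumerates(1) assms] es_enumerates(2)
  unfolding nbc_F_def nbc_G_def by auto

lemma nbc_F_G_high:
  assumes "j \<in> {s + 1..m}"
  shows "F j = E" "G j = cl E (dual_bases E Bs) {y \<in> cobasis_rest. es j \<le> y}"
  using assms strict_mono_on_image_from[OF es_enumerates(3) assms] es_enumerates(4)
  unfolding nbc_F_def nbc_G_def by auto

lemma index_cases:
  assumes "j \<in> {1..m}"
  obtains (low) "j \<in> {1..s}" | (high) "j \<in> {s + 1..m}"
  using assms by fastforce

lemma nbc_F_Int_G:
  "j \<in> {1..s} \<Longrightarrow> F j \<inter> G j = cl E Bs {x \<in> int_passive. es j \<le> x}"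
  "j \<in> {s + 1..m} \<Longrightarrow> F j \<inter> G j = cl E (dual_bases E Bs) {y \<in> cobasis_rest. es j \<le> y}"
  using nbc_F_G_low nbc_F_G_high cl_subset_ground dual.cl_subset_ground by blast+

lemma es_in_F_Int_G:
  assumes "j \<in> {1..m}"
  shows "es j \<in> F j \<inter> G j"
  using assms
proof (cases rule: index_cases)
  case low
  then have "es j \<in> {x \<in> int_passive. es j \<le> x}"
    using es_enumerates(2) by blast
  moreover have "{x \<in> int_passive. es j \<le> x} \<subseteq> E"
    using int_passive_subset basis_subset[OF basis] by blast
  ultimately show ?thesis
    using nbc_F_Int_G(1)[OF low] subset_cl by blast
next
  case high
  then have "es j \<in> {y \<in> cobasis_rest. es j \<le> y}"
    using es_enumerates(4) by blast
  moreover have "{y \<in> cobasis_rest. es j \<le> y} \<subseteq> E"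
    using cobasis_rest_subset by blast
  ultimately show ?thesis
    using nbc_F_Int_G(2)[OF high] dual.subset_cl by blast
qed

lemma es_in_ground: "j \<in> {1..m} \<Longrightarrow> es j \<in> E"
  using es_image int_passive_subset cobasis_rest_subset basis_subset[OF basis] by blast

lemma es_notin_F_Int_G_greater:
  assumes i: "i \<in> {1..m}" and j: "j \<in> {1..m}" and less: "es i < es j"
  shows "es i \<notin> F j \<inter> G j"
proof -
  have ei: "es i \<in> int_passive \<union> cobasis_rest"
    using es_image i by blast
  from j show ?thesis
  proof (cases rule: index_cases)
    case low
    have "es i \<notin> cl E Bs {x \<in> int_passive. es j \<le> x}"
      using less by (intro notin_cl_greater[OF ei]) auto
    then show ?thesis
      using nbc_F_Int_G(1)[OF low] by simp
  next
    case high
    have "es i \<notin> cl E (dual_bases E Bs) {y \<in> cobasis_rest. es j \<le> y}"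
      using less by (intro notin_dual_cl_greater[OF ei]) auto
    then show ?thesis
      using nbc_F_Int_G(2)[OF high] by simp
  qed
qed

lemma cobasis_min_notin_F_Int_G:
  assumes "j \<in> {1..m}"
  shows "cobasis_min \<notin> F j \<inter> G j"
  using assms
proof (cases rule: index_cases)
  case low
  have "cobasis_min \<notin> cl E Bs {x \<in> int_passive. es j \<le> x}"
    by (rule cobasis_min_notin_cl) blast
  then show ?thesis
    using nbc_F_Int_G(1)[OF low] by simp
next
  case high
  have "{y \<in> cobasis_rest. es j \<le> y} \<subseteq> E - B" "cobasis_min \<notin> {y \<in> cobasis_rest. es j \<le> y}"
    using cobasis_rest_subset unfolding cobasis_rest_def by blast+
  then have "cobasis_min \<notin> cl E (dual_bases E Bs) {y \<in> cobasis_rest. es j \<le> y}"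
    using dual.basis_elem_notin_cl[OF cobasis_dual_basis] cobasis_min(1) by blast
  then show ?thesis
    using nbc_F_Int_G(2)[OF high] by simp
qed

lemma greater_in_F_Int_G:
  assumes i: "i \<in> {1..m}" and y: "y \<in> E" "es i < y"
  shows "\<exists>j\<in>{1..m}. es i < es j \<and> y \<in> F j \<inter> G j"
proof -
  have "es i \<in> int_passive \<union> cobasis_rest"
    using es_image i by blast
  then have "cobasis_min < y"
    using cobasis_min_less y(2) by (meson less_trans)
  then consider "y \<in> int_passive \<union> cobasis_rest" | "y \<in> IA E Bs B"
    using y(1) unfolding int_passive_def cobasis_rest_def by blast
  then show ?thesis
  proof cases
    case 1
    then obtain j where "j \<in> {1..m}" "y = es j"
      using es_image by (metis imageE)
    then show ?thesis
      using es_in_F_Int_G y(2) by blast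
  next
    case 2
    then obtain w where w: "w \<in> cobasis_rest" "y < w"
      and y_cl: "y \<in> cl E (dual_bases E Bs) {z \<in> cobasis_rest. w \<le> z}"
      using IA_in_dual_cl_upper \<open>cobasis_min < y\<close> by blast
    obtain j where j: "j \<in> {s + 1..m}" "w = es j"
      using w(1) es_enumerates(4) by (metis imageE)
    then have "y \<in> F j \<inter> G j"
      using nbc_F_Int_G(2)[OF j(1)] y_cl by simp
    moreover have "j \<in> {1..m}" "es i < es j"
      using j w(2) y(2) by auto
    ultimately show ?thesis
      by blast
  qed
qed

lemma es_eq_Max:
  assumes i: "i \<in> {1..m}"
  shows "es i = Max (E - (\<Union>j\<in>{j \<in> {1..m}. es i < es j}. F j \<inter> G j))"
proof (rule Max_eqI[symmetric])
  show "finite (E - (\<Union>j\<in>{j \<in> {1..m}. es i < es j}. F j \<inter> G j))"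
    using finite_ground by simp
  show "es i \<in> E - (\<Union>j\<in>{j \<in> {1..m}. es i < es j}. F j \<inter> G j)"
    using es_in_ground[OF i] es_notin_F_Int_G_greater[OF i] by blast
  show "y \<le> es i" if y: "y \<in> E - (\<Union>j\<in>{j \<in> {1..m}. es i < es j}. F j \<inter> G j)" for y
  proof (rule ccontr)
    assume "\<not> y \<le> es i"
    then obtain j where "j \<in> {1..m}" "es i < es j" "y \<in> F j \<inter> G j"
      using greater_in_F_Int_G[OF i] y by force
    then show False
      using y by blast
  qed
qed

lemma inj_on_es: "inj_on es {1..m}"
proof (rule eq_card_imp_inj_on)
  have "int_passive \<inter> cobasis_rest = {}"
    using int_passive_subset cobasis_rest_subset by blast
  moreover have "finite int_passive" "finite cobasis_rest"
    using es_enumerates(2,4) by (metis finite_atLeastAtMost finite_imageI)+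
  ultimately show "card (es ` {1..m}) = card {1..m}"
    using es_image by (simp add: card_Un_disjoint)
qed simp

lemma nbc_F_G_mono:
  assumes i: "i \<in> {1..m}" and j: "j \<in> {1..m}" and "i \<le> j"
  shows "F i \<subseteq> F j \<and> G j \<subseteq> G i"
proof (cases "j \<le> s")
  case True
  then have "es j \<le> es i"
    using assms monotone_onD[OF es_enumerates(1), of i j] by (cases "i = j") auto
  then have "cl E Bs {x \<in> int_passive. es i \<le> x} \<subseteq> cl E Bs {x \<in> int_passive. es j \<le> x}"
    using cl_mono_subset_basis[OF basis] int_passive_subset by (intro cl_mono_subset_basis[OF basis]) auto
  then show ?thesis
    using nbc_F_G_low assms True by simp
next
  case False
  show ?thesis
  proof (cases "i \<le> s")
    case True
    then show ?thesis
      using nbc_F_G_low nbc_F_G_high assms False cl_subset_ground dual.cl_subset_ground by simp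
  next
    case i_high: False
    then have "es i \<le> es j"
      using assms monotone_onD[OF es_enumerates(3), of i j] by (cases "i = j") auto
    then have "cl E (dual_bases E Bs) {y \<in> cobasis_rest. es j \<le> y}
        \<subseteq> cl E (dual_bases E Bs) {y \<in> cobasis_rest. es i \<le> y}"
      using cobasis_rest_subset by (intro dual.cl_mono_subset_basis[OF cobasis_dual_basis]) auto
    then show ?thesis
      using nbc_F_G_high assms False i_high by simp
  qed
qed

lemma biflat_nbc_F_G:
  assumes j: "j \<in> {1..m}"
  shows "biflat E Bs (F j) (G j)"
proof -
  have flats: "flat E Bs (F j) \<and> flat E (dual_bases E Bs) (G j) \<and> (F j = E \<or> G j = E)"
    using j
  proof (cases rule: index_cases)
    case low
    have "indep Bs {x \<in> int_passive. es j \<le> x}"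
      by (rule indep_subset_basis[OF basis]) (use int_passive_subset in blast)
    then show ?thesis
      using nbc_F_G_low[OF low] flat_cl_indep dual.flat_ground by simp
  next
    case high
    have "indep (dual_bases E Bs) {y \<in> cobasis_rest. es j \<le> y}"
      by (rule dual.indep_subset_basis[OF cobasis_dual_basis]) (use cobasis_rest_subset in blast)
    then show ?thesis
      using nbc_F_G_high[OF high] dual.flat_cl_indep flat_ground by simp
  qed
  moreover have "F j \<subseteq> E" "G j \<subseteq> E"
    using flats unfolding flat_def by auto
  moreover have "es j \<in> F j \<inter> G j" "cobasis_min \<notin> F j \<inter> G j" "cobasis_min \<in> E"
    using es_in_F_Int_G[OF j] cobasis_min_notin_F_Int_G[OF j] cobasis_min(1) by auto
  ultimately show ?thesis
    unfolding biflat_def by blast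
qed

lemma inj_on_nbc_F_G: "inj_on (\<lambda>j. (F j, G j)) {1..m}"
proof (rule inj_onI, rule ccontr)
  fix i j assume i: "i \<in> {1..m}" and j: "j \<in> {1..m}" and eq: "(F i, G i) = (F j, G j)" and "i \<noteq> j"
  then have "es i \<noteq> es j"
    using inj_on_es by (meson inj_on_contraD)
  then consider "es i < es j" | "es j < es i"
    by (meson linorder_neqE)
  then show False
  proof cases
    case 1
    then show False
      using es_in_F_Int_G[OF i] es_notin_F_Int_G_greater[OF i j] eq by simp
  next
    case 2
    then show False
      using es_in_F_Int_G[OF j] es_notin_F_Int_G_greater[OF j i] eq by simp
  qed
qed

lemma biflag_nbc_F_G: "biflag E Bs ((\<lambda>j. (F j, G j)) ` {1..m})"
  unfolding biflag_def
proof (intro conjI ballI)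
  fix p assume "p \<in> (\<lambda>j. (F j, G j)) ` {1..m}"
  then show "biflat E Bs (fst p) (snd p)"
    using biflat_nbc_F_G by auto
next
  fix p q assume "p \<in> (\<lambda>j. (F j, G j)) ` {1..m}" "q \<in> (\<lambda>j. (F j, G j)) ` {1..m}"
  then obtain i j where "i \<in> {1..m}" "j \<in> {1..m}" "p = (F i, G i)" "q = (F j, G j)"
    by blast
  then show "compatible p q"
    unfolding compatible_def using nbc_F_G_mono by (cases "i \<le> j") auto
next
  show "(\<Union>p\<in>(\<lambda>j. (F j, G j)) ` {1..m}. fst p \<inter> snd p) \<noteq> E"
  proof
    assume "(\<Union>p\<in>(\<lambda>j. (F j, G j)) ` {1..m}. fst p \<inter> snd p) = E"
    moreover have "cobasis_min \<in> E"
      using cobasis_min(1) by blast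
    ultimately have "cobasis_min \<in> (\<Union>j\<in>{1..m}. F j \<inter> G j)"
      by simp
    then obtain j where "j \<in> {1..m}" "cobasis_min \<in> F j \<inter> G j"
      by blast
    then show False
      using cobasis_min_notin_F_Int_G by blast
  qed
qed

lemma nbc_biflag_in_T: "in_T E Bs m F G es"
  unfolding in_T_def
proof (intro conjI ballI impI)
  show "es ` {1..m} \<subseteq> E"
    using es_in_ground by blast
  fix i assume i: "i \<in> {1..m}"
  then show "es i \<in> F i \<inter> G i" "es i = Max (E - (\<Union>j\<in>{j \<in> {1..m}. es i < es j}. F j \<inter> G j))"
    by (rule es_in_F_Int_G, rule es_eq_Max)
  fix j assume "j \<in> {1..m}" "i \<le> j"
  then show "F i \<subseteq> F j" "G j \<subseteq> G i"
    using nbc_F_G_mono[OF i] by auto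
qed (rule biflag_nbc_F_G inj_on_nbc_F_G inj_on_es)+

lemma card_int_passive: "card int_passive = c - card (IA E Bs B)"
  unfolding int_passive_def using card_basis[OF basis] finite_basis[OF basis]
  by (simp add: card_Diff_subset finite_subset[of "IA E Bs B" B] IA_def)

lemma card_cobasis_rest: "card cobasis_rest = card E - c - 1"
  using card_Diff_subset[OF finite_basis[OF basis] basis_subset[OF basis]] card_basis[OF basis]
    cobasis_min(1) finite_ground unfolding cobasis_rest_def by simp

lemma rank_less_card_ground: "c < card E"
proof -
  have "card (E - B) > 0"
    using cobasis_nonempty finite_ground by (simp add: card_gt_0_iff)
  then show ?thesis
    using card_Diff_subset[OF finite_basis[OF basis] basis_subset[OF basis]] card_basis[OF basis]
    by simp
qed

end

theorem mainTheorem8: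
  fixes n r k :: nat and Bs :: "nat set set" and B :: "nat set"
  assumes "matroid_bases {0..n} Bs"
    and no_loops: "\<forall>x\<in>{0..n}. \<exists>B'\<in>Bs. x \<in> B'"
    and no_coloops: "\<forall>x\<in>{0..n}. \<exists>B'\<in>Bs. x \<notin> B'"
    and rank: "\<forall>B'\<in>Bs. card B' = r + 1"
    and "nbc_basis {0..n} Bs B"
    and "card (IA {0..n} Bs B) = k + 1"
  shows "in_T {0..n} Bs (n - k - 1)
           (nbc_F {0..n} Bs B (r - k))
           (nbc_G {0..n} Bs B (r - k) (n - k - 1))
           (nbc_seq {0..n} Bs B)"
proof -
  interpret nbc_basis_of "{0..n}" Bs "r + 1" B
    using assms by unfold_locales auto
  have "card (IA {0..n} Bs B) \<le> r + 1"
    using card_mono[OF finite_basis[OF basis], of "IA {0..n} Bs B"] card_basis[OF basis]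
    unfolding IA_def by auto
  moreover have "r + 1 < n + 1"
    using rank_less_card_ground by simp
  ultimately have "card int_passive = r - k" "card int_passive + card cobasis_rest = n - k - 1"
    using card_int_passive card_cobasis_rest assms(6) by auto
  then show ?thesis
    using nbc_biflag_in_T by simp
qed

end
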